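(* Let $\ell$ be a positive integer and $a_1,\dots,a_\ell,b,c$ positive integers, and put $\vec k_1=(a_1,\dots,a_\ell,b)$ and $\vec k_2=(a_1,\dots,a_\ell,c)$. Then $\widetilde{C}_{\vec k_1}(q,t)=\widetilde{C}_{\vec k_2}(q,t)$, where $\widetilde{C}_{\vec k}(q,t)=\sum_{\pi\in\mathcal D_{\vec k}}q^{\mathrm{area}(\pi)}t^{\mathrm{depth}(\pi)}$.
   Context: For $\vec k=(k_1,\dots,k_m)$ put $|\vec k|=\sum k_i$, $N=|\vec k|+m$. A $\vec k$-Dyck path is a word $\pi=\pi_1\cdots\pi_N$ containing the letters $S^{k_1},\dots,S^{k_m}$ exactly once each and in this order, together with $|\vec k|$ letters $W$, such that all starting ranks are nonnegative, where $r_1=0$, $r_{i+1}=r_i+k_j$ if $\pi_i=S^{k_j}$ and $r_{i+1}=r_i-1$ if $\pi_i=W$. $\mathcal D_{\vec k}$ is the set of such paths. $\mathrm{area}(\pi)=\sum_j a_j$ where $a_j$ is the starting rank of $S^{k_j}$. Filling algorithm $\eta_*$: in a tableau of $m$ top-justified columns, column $i$ having $k_i+1$ cells, place $1$ at the top of column 1; for $i=2,\dots,N$, call an entry active if it is currently the bottom entry of a column $i'$ not yet containing $k_{i'}+1$ entries; if $\pi_i=W$ place $i$ immediately below the largest active entry, otherwise place $i$ at the top of the first empty column. Ranking algorithm $\gamma_*$: column 1 gets ranks $0,\dots,k_1$ top to bottom; for $i\ge2$, if the top entry of column $i$ of $\eta_*(\pi)$ is $A+1$ and $A$ has rank $\alpha$,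 column $i$ gets ranks $\alpha,\dots,\alpha+k_i$ top to bottom. $\mathrm{depth}(\pi)$ is the sum of the first-row ranks. *)

theory Defs
  imports "HOL-Computational_Algebra.Polynomial"
begin

text \<open>Letters of a k-Dyck path: S j stands for the letter S^{k_{j+1}} (0-indexed
  column j), W is a west step.  A vector k is a list of naturals, m = length k.\<close>

datatype letter = S nat | W

fun step_rank :: "nat list \<Rightarrow> letter \<Rightarrow> int" where
  "step_rank k (S j) = int (k ! j)"
| "step_rank k W = -1"

text \<open>Rank reached after reading the word w, starting from rank 0.
  The starting rank r_{i+1} of the (i+1)-st letter (1-based) is rank_of k (take i w).\<close>
definition rank_of :: "nat list \<Rightarrow> letter list \<Rightarrow> int" where
  "rank_of k w = sum_list (map (step_rank k) w)"

definition is_S :: "letter \<Rightarrow> bool" where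
  "is_S x = (x \<noteq> W)"

definition dyck_paths :: "nat list \<Rightarrow> letter list set" where
  "dyck_paths k = {\<pi>. filter is_S \<pi> = map S [0..<length k]
      \<and> length (filter (\<lambda>x. x = W) \<pi>) = sum_list k
      \<and> (\<forall>i < length \<pi>. rank_of k (take i \<pi>) \<ge> 0)}"

definition area :: "nat list \<Rightarrow> letter list \<Rightarrow> nat" where
  "area k \<pi> = (\<Sum>i\<in>{i. i < length \<pi> \<and> is_S (\<pi> ! i)}. nat (rank_of k (take i \<pi>)))"

text \<open>Filling algorithm. A tableau is a list of m columns, each a list of entries read
  top to bottom.  Column j (0-indexed) has capacity k!j + 1.\<close>
definition active_cols :: "nat list \<Rightarrow> nat list list \<Rightarrow> nat set" where
  "active_cols k T = {j. j < length k \<and> T ! j \<noteq> [] \<and> length (T ! j) < k ! j + 1}"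

fun fill_step :: "nat list \<Rightarrow> nat list list \<Rightarrow> nat \<times> letter \<Rightarrow> nat list list" where
  "fill_step k T (i, W) =
     (let M = Max ((\<lambda>j. last (T ! j)) ` active_cols k T);
          j = (SOME j. j \<in> active_cols k T \<and> last (T ! j) = M)
      in T[j := T ! j @ [i]])"
| "fill_step k T (i, S _) =
     (let j = (LEAST j. j < length k \<and> T ! j = []) in T[j := [i]])"

definition fill :: "nat list \<Rightarrow> letter list \<Rightarrow> nat list list" where
  "fill k \<pi> = foldl (fill_step k) ((replicate (length k) [])[0 := [1]])
                 (zip [2..<length \<pi> + 1] (tl \<pi>))"

text \<open>Ranking algorithm: ranks of the top entries of columns 0..i-1.  Column 0 starts
  at rank 0; column i (i>0) with top entry A+1 starts at the rank of A, where A sits in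
  an earlier column j at position p (0-based from the top), whose rank is
  (top rank of column j) + p.\<close>
fun col_ranks :: "nat list list \<Rightarrow> nat \<Rightarrow> nat list" where
  "col_ranks T 0 = []"
| "col_ranks T (Suc i) =
     (let rs = col_ranks T i in
      rs @ [if i = 0 then 0 else
              (let A = hd (T ! i) - 1;
                   j = (SOME j. j < i \<and> A \<in> set (T ! j));
                   p = (LEAST p. p < length (T ! j) \<and> T ! j ! p = A)
               in rs ! j + p)])"

definition depth :: "nat list \<Rightarrow> letter list \<Rightarrow> nat" where
  "depth k \<pi> = sum_list (col_ranks (fill k \<pi>) (length k))"

text \<open>C~_k(q,t) as a bivariate polynomial: outer variable q, inner variable t.\<close>
definition Ctilde :: "nat list \<Rightarrow> int poly poly" where
  "Ctilde k = (\<Sum>\<pi>\<in>dyck_paths k. monom (monom 1 (depth k \<pi>)) (area k \<pi>))"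

end

theory Submission
  imports Defs
begin

(* A (k @ [x])-Dyck path is P S W^r, where S is its last S-letter, P has the S-letters of k and
   nonnegative ranks, and r = rank P + x brings the path back to rank 0; the set of such P does
   not depend on x.  The area of the path is area P + rank P.  For the depth: while reading P
   the last column of the tableau stays empty, because the free cells of the opened columns
   number exactly the current rank, so the filling of P S does not see x.  The trailing W's
   only append entries larger than |P| + 1 to columns, whereas the ranking algorithm only
   locates entries A with A + 1 at the top of a column, all of which are at most |P| + 1. *)

lemma rank_of_Nil [simp]: "rank_of k [] = 0"
  by (simp add: rank_of_def)

lemma rank_of_Cons [simp]: "rank_of k (y # w) = step_rank k y + rank_of k w"
  by (simp add: rank_of_def)

lemma rank_of_append [simp]: "rank_of k (u @ v) = rank_of k u + rank_of k v"
  by (simp add: rank_of_def)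

lemma rank_of_replicate_W [simp]: "rank_of k (replicate n W) = - int n"
  by (induction n) simp_all

lemma rank_of_append_vector:
  assumes "\<And>j. S j \<in> set w \<Longrightarrow> j < length k"
  shows "rank_of (k @ ks) w = rank_of k w"
  using assms
proof (induction w)
  case (Cons y w)
  then show ?case by (cases y) (auto simp: nth_append)
qed simp

lemma rank_of_conv_filter:
  "rank_of k w = int (sum_list (map (\<lambda>y. case y of S j \<Rightarrow> k ! j | W \<Rightarrow> 0) (filter is_S w)))
     - int (length (filter (\<lambda>y. y = W) w))"
proof (induction w)
  case (Cons y w)
  then show ?case by (cases y) (auto simp: is_S_def)
qed simp

lemma rank_of_all_S_letters:
  assumes "filter is_S w = map S [0..<length k]"
  shows "rank_of k w = int (sum_list k) - int (length (filter (\<lambda>y. y = W) w))"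
proof -
  have "map ((\<lambda>y. case y of S j \<Rightarrow> k ! j | W \<Rightarrow> 0) \<circ> S) [0..<length k] = k"
    by (simp add: o_def map_nth)
  then show ?thesis using assms by (simp add: rank_of_conv_filter)
qed

lemma S_index_less:
  assumes "filter is_S w = map S [0..<n]" and "S j \<in> set w"
  shows "j < n"
proof -
  have "S j \<in> set (filter is_S w)" using assms(2) by (simp add: is_S_def)
  then show ?thesis using assms(1) by auto
qed

lemma rank_of_snoc_vector_take:
  assumes "filter is_S w = map S [0..<length k]"
  shows "rank_of (k @ [x]) (take i w) = rank_of k (take i w)"
  by (rule rank_of_append_vector) (meson S_index_less assms in_set_takeD)

definition prefixes_before_last :: "nat list \<Rightarrow> letter list set" where
  "prefixes_before_last k = {P. filter is_S P = map S [0..<length k]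
      \<and> (\<forall>i \<le> length P. 0 \<le> rank_of k (take i P))}"

definition close_path :: "nat list \<Rightarrow> nat \<Rightarrow> letter list \<Rightarrow> letter list" where
  "close_path k x P = P @ S (length k) # replicate (nat (rank_of k P) + x) W"

lemma close_path_in_dyck_paths:
  assumes "P \<in> prefixes_before_last k"
  shows "close_path k x P \<in> dyck_paths (k @ [x])"
proof -
  have F: "filter is_S P = map S [0..<length k]"
    and rk: "\<forall>i \<le> length P. 0 \<le> rank_of k (take i P)"
    using assms by (auto simp: prefixes_before_last_def)
  have rank_P: "rank_of k P = int (sum_list k) - int (length (filter (\<lambda>y. y = W) P))"
    using F by (rule rank_of_all_S_letters)
  have "filter is_S (close_path k x P) = map S [0..<length (k @ [x])]"
    using F by (simp add: close_path_def is_S_def filter_replicate)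
  moreover have "length (filter (\<lambda>y. y = W) (close_path k x P)) = sum_list (k @ [x])"
    using rank_P rk[rule_format, of "length P"] by (simp add: close_path_def filter_replicate)
  moreover have "0 \<le> rank_of (k @ [x]) (take i (close_path k x P))"
    if i: "i < length (close_path k x P)" for i
  proof (cases "i \<le> length P")
    case True
    then show ?thesis using rk rank_of_snoc_vector_take[OF F] by (simp add: close_path_def)
  next
    case False
    then obtain j where j: "i = Suc (length P + j)"
      by (metis add_Suc_right less_imp_Suc_add not_le)
    with i have "j < nat (rank_of k P) + x" by (simp add: close_path_def)
    moreover have "take i (close_path k x P) = P @ S (length k) # replicate j W"
      using calculation j by (simp add: close_path_def)
    moreover have "0 \<le> rank_of k P" using rk[rule_format, of "length P"] by simp
    ultimately show ?thesis
      using rank_of_snoc_vector_take[OF F, of x "length P"] by simp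
  qed
  ultimately show ?thesis by (simp add: dyck_paths_def)
qed

lemma dyck_paths_snoc_subset:
  assumes D: "\<pi> \<in> dyck_paths (k @ [x])"
  shows "\<pi> \<in> close_path k x ` prefixes_before_last k"
proof -
  let ?l = "length k"
  have "filter is_S (rev \<pi>) = S ?l # rev (map S [0..<?l])"
    using D by (simp add: dyck_paths_def rev_filter[symmetric])
  from filter_eq_ConsD[OF this] obtain Q' P' where
    split: "rev \<pi> = Q' @ S ?l # P'" and "\<forall>y\<in>set Q'. \<not> is_S y"
    and FP': "rev (map S [0..<?l]) = filter is_S P'"
    by blast
  define P where "P = rev P'"
  define Q where "Q = rev Q'"
  have pi: "\<pi> = P @ S ?l # Q"
    unfolding P_def Q_def using arg_cong[OF split, of rev] by simp
  have FP: "filter is_S P = map S [0..<?l]"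
    unfolding P_def using FP' by (metis rev_filter rev_rev_ident)
  have "\<forall>y\<in>set Q. y = W"
    using \<open>\<forall>y\<in>set Q'. \<not> is_S y\<close> by (simp add: Q_def is_S_def)
  then have Q: "Q = replicate (length Q) W"
    by (simp add: replicate_length_same)
  have rk: "0 \<le> rank_of k (take i P)" if "i \<le> length P" for i
  proof -
    have "take i \<pi> = take i P" and "i < length \<pi>" using that pi by simp_all
    then show ?thesis using D rank_of_snoc_vector_take[OF FP, of x i] by (auto simp: dyck_paths_def)
  qed
  then have P: "P \<in> prefixes_before_last k"
    using FP by (simp add: prefixes_before_last_def)
  have "length (filter (\<lambda>y. y = W) \<pi>) = sum_list k + x"
    using D by (simp add: dyck_paths_def)
  then have "length (filter (\<lambda>y. y = W) P) + length Q = sum_list k + x"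
    using pi by (subst (asm) Q) (simp add: filter_replicate)
  then have "length Q = nat (rank_of k P) + x"
    using rank_of_all_S_letters[OF FP] rk[of "length P"] by simp
  then have "\<pi> = close_path k x P"
    using pi Q by (simp add: close_path_def)
  then show ?thesis using P by blast
qed

lemma dyck_paths_snoc: "dyck_paths (k @ [x]) = close_path k x ` prefixes_before_last k"
  using dyck_paths_snoc_subset close_path_in_dyck_paths by blast

lemma inj_on_close_path: "inj_on (close_path k x) (prefixes_before_last k)"
proof (rule inj_onI)
  fix P1 P2
  assume P: "P1 \<in> prefixes_before_last k" "P2 \<in> prefixes_before_last k"
    and eq: "close_path k x P1 = close_path k x P2"
  have "S (length k) \<notin> set P1"
    using P(1) S_index_less[of P1 "length k"] by (auto simp: prefixes_before_last_def)
  then show "P1 = P2"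
    using eq append_Cons_eq_iff[of "S (length k)" P1] by (simp add: close_path_def)
qed

lemma area_snoc:
  "area k (w @ [y]) = area k w + (if is_S y then nat (rank_of k w) else 0)"
proof -
  let ?f = "\<lambda>i. nat (rank_of k (take i w))"
  have idx: "{i. i < length (w @ [y]) \<and> is_S ((w @ [y]) ! i)}
      = {i. i < length w \<and> is_S (w ! i)} \<union> (if is_S y then {length w} else {})"
    by (auto simp: nth_append less_Suc_eq)
  have "area k (w @ [y]) = (\<Sum>i\<in>{i. i < length (w @ [y]) \<and> is_S ((w @ [y]) ! i)}. ?f i)"
    unfolding area_def by (rule sum.cong) auto
  also have "\<dots> = area k w + (if is_S y then ?f (length w) else 0)"
    unfolding idx area_def by simp
  finally show ?thesis by simp
qed

lemma area_append_replicate_W: "area k (w @ replicate n W) = area k w"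
proof (induction n)
  case (Suc n)
  then show ?case
    using area_snoc[of k "w @ replicate n W" W]
    by (simp add: is_S_def replicate_append_same[symmetric])
qed simp

lemma area_append_vector:
  assumes "\<And>j. S j \<in> set w \<Longrightarrow> j < length k"
  shows "area (k @ ks) w = area k w"
  unfolding area_def using assms
  by (intro sum.cong refl) (metis in_set_takeD rank_of_append_vector)

lemma area_close_path:
  assumes "P \<in> prefixes_before_last k"
  shows "area (k @ [x]) (close_path k x P) = area k P + nat (rank_of k P)"
proof -
  have F: "filter is_S P = map S [0..<length k]"
    using assms by (simp add: prefixes_before_last_def)
  have "close_path k x P = (P @ [S (length k)]) @ replicate (nat (rank_of k P) + x) W"
    by (simp add: close_path_def)
  then have "area (k @ [x]) (close_path k x P) = area (k @ [x]) (P @ [S (length k)])"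
    by (simp only: area_append_replicate_W)
  also have "\<dots> = area (k @ [x]) P + nat (rank_of (k @ [x]) P)"
    by (simp add: area_snoc is_S_def)
  also have "\<dots> = area k P + nat (rank_of k P)"
    using area_append_vector[of P k "[x]"] S_index_less[OF F]
      rank_of_snoc_vector_take[OF F, of x "length P"]
    by simp
  finally show ?thesis .
qed

lemma fill_Nil: "fill k [] = (replicate (length k) [])[0 := [1]]"
  by (simp add: fill_def)

lemma fill_single: "fill k [y] = (replicate (length k) [])[0 := [1]]"
  by (simp add: fill_def)

lemma fill_snoc:
  assumes "w \<noteq> []"
  shows "fill k (w @ [y]) = fill_step k (fill k w) (Suc (length w), y)"
proof -
  obtain x v where w: "w = x # v" using assms by (cases w) auto
  have "[2..<length w + 2] = [2..<length w + 1] @ [Suc (length w)]"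
    by (simp add: w upt_Suc_append)
  moreover have "length [2..<length w + 1] = length (tl w)"
    by (simp only: length_upt length_tl)
  ultimately have "zip [2..<length w + 2] (tl (w @ [y]))
      = zip [2..<length w + 1] (tl w) @ [(Suc (length w), y)]"
    by (simp add: w)
  then show ?thesis by (simp add: fill_def)
qed

lemma fill_step_W: "\<exists>j. fill_step k T (i, W) = T[j := T ! j @ [i]]"
  by (simp add: Let_def) (rule exI, rule refl)

lemma fill_step_cases:
  "\<exists>j. fill_step k T (i, y) = T[j := T ! j @ [i]] \<or> fill_step k T (i, y) = T[j := [i]]"
  using fill_step_W by (cases y) (auto simp: Let_def)

lemma length_fill_step [simp]: "length (fill_step k T p) = length T"
proof -
  obtain i y where "p = (i, y)" by fastforce
  then show ?thesis by (cases y) (simp_all add: Let_def)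
qed

lemma length_fill [simp]: "length (fill k w) = length k"
proof (induction w rule: rev_induct)
  case (snoc y w)
  then show ?case by (cases "w = []") (simp_all add: fill_single fill_snoc)
qed (simp add: fill_Nil)

lemma fill_entries_le:
  assumes "w \<noteq> []" and "j < length k"
  shows "\<forall>a\<in>set (fill k w ! j). a \<le> length w"
  using assms
proof (induction w arbitrary: j rule: rev_induct)
  case (snoc y w)
  show ?case
  proof (cases "w = []")
    case True
    then show ?thesis using snoc.prems by (cases "j = 0") (simp_all add: fill_single)
  next
    case False
    obtain j' where
      "fill_step k (fill k w) (Suc (length w), y) = (fill k w)[j' := fill k w ! j' @ [Suc (length w)]]
        \<or> fill_step k (fill k w) (Suc (length w), y) = (fill k w)[j' := [Suc (length w)]]"
      using fill_step_cases by blast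
    then have "a \<le> Suc (length w)" if "a \<in> set (fill_step k (fill k w) (Suc (length w), y) ! j)" for a
      using that snoc.IH[OF False snoc.prems(2)] snoc.prems(2)
      by (cases "j = j'") (auto simp: le_Suc_eq)
    then show ?thesis using False by (simp add: fill_snoc)
  qed
qed simp

definition extends_columns :: "nat \<Rightarrow> nat list list \<Rightarrow> nat list list \<Rightarrow> bool" where
  "extends_columns n T T' \<longleftrightarrow> length T' = length T \<and>
     (\<forall>j<length T. \<exists>X. T' ! j = T ! j @ X \<and> (\<forall>a\<in>set X. n < a))"

lemma extends_columns_refl: "extends_columns n T T"
  by (auto simp: extends_columns_def)

lemma extends_columns_snoc_entry:
  assumes ext: "extends_columns n T T'" and "n < a"
  shows "extends_columns n T (T'[j := T' ! j @ [a]])"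
  unfolding extends_columns_def
proof (intro conjI allI impI)
  show "length (T'[j := T' ! j @ [a]]) = length T"
    using ext by (simp add: extends_columns_def)
next
  fix j' assume "j' < length T"
  then obtain X where X: "T' ! j' = T ! j' @ X" "\<forall>b\<in>set X. n < b"
    using ext by (auto simp: extends_columns_def)
  show "\<exists>X. T'[j := T' ! j @ [a]] ! j' = T ! j' @ X \<and> (\<forall>b\<in>set X. n < b)"
  proof (cases "j = j'")
    case True
    then show ?thesis
      using X \<open>n < a\<close> \<open>j' < length T\<close> ext
      by (intro exI[of _ "X @ [a]"]) (auto simp: extends_columns_def)
  next
    case False
    then show ?thesis using X by auto
  qed
qed

lemma fill_append_replicate_W:
  assumes "u \<noteq> []"
  shows "extends_columns (length u) (fill k u) (fill k (u @ replicate r W))"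
proof (induction r)
  case 0
  show ?case by (simp add: extends_columns_refl)
next
  case (Suc r)
  let ?T = "fill k (u @ replicate r W)"
  have "u @ replicate (Suc r) W = (u @ replicate r W) @ [W]"
    by (simp add: replicate_append_same)
  moreover have "fill k ((u @ replicate r W) @ [W]) = fill_step k ?T (Suc (length u + r), W)"
    using assms by (subst fill_snoc) simp_all
  ultimately have "fill k (u @ replicate (Suc r) W) = fill_step k ?T (Suc (length u + r), W)"
    by simp
  moreover obtain j
    where "fill_step k ?T (Suc (length u + r), W) = ?T[j := ?T ! j @ [Suc (length u + r)]]"
    using fill_step_W by blast
  ultimately show ?case
    using extends_columns_snoc_entry[OF Suc.IH] by simp
qed

lemma nth_append_eq_iff_notin:
  assumes "a \<notin> set X"
  shows "(p < length (U @ X) \<and> (U @ X) ! p = a) \<longleftrightarrow> (p < length U \<and> U ! p = a)"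
  using assms by (auto simp: nth_append dest: nth_mem[of "p - length U" X])

lemma col_ranks_extends_columns:
  assumes extT: "extends_columns n T T'" and i: "i \<le> length T"
    and ne: "\<forall>j<length T. T ! j \<noteq> []" and le: "\<forall>j<length T. \<forall>a\<in>set (T ! j). a \<le> n"
  shows "col_ranks T' i = col_ranks T i"
  using i
proof (induction i)
  case (Suc i)
  then have i: "i < length T" by simp
  have ext_col: "\<exists>X. T' ! j = T ! j @ X \<and> (\<forall>a\<in>set X. n < a)" if "j < length T" for j
    using extT that by (simp add: extends_columns_def)
  have hd_eq: "hd (T' ! i) = hd (T ! i)"
    using ext_col[OF i] ne i by auto
  define A where "A = hd (T ! i) - 1"
  have "A \<le> n"
    using ne le i unfolding A_def by (metis diff_le_self hd_in_set le_trans)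
  have col: "(\<lambda>j. j < i \<and> A \<in> set (T' ! j)) = (\<lambda>j. j < i \<and> A \<in> set (T ! j))"
  proof (rule ext)
    fix j
    show "(j < i \<and> A \<in> set (T' ! j)) = (j < i \<and> A \<in> set (T ! j))"
      using ext_col[of j] i \<open>A \<le> n\<close> by (cases "j < i") (auto dest: leD)
  qed
  have pos: "(\<lambda>p. p < length (T' ! j) \<and> T' ! j ! p = A)
      = (\<lambda>p. p < length (T ! j) \<and> T ! j ! p = A)" for j
  proof (cases "j < length T")
    case True
    then obtain X where "T' ! j = T ! j @ X" and "A \<notin> set X"
      using ext_col[of j] \<open>A \<le> n\<close> by force
    then show ?thesis by (simp only:) (rule ext, rule nth_append_eq_iff_notin)
  next
    case False
    \<comment> \<open>past the end, \<open>!\<close> returns the same unspecified value for lists of equal length\<close>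
    have "length T' = length T" using extT by (simp add: extends_columns_def)
    then have "T' ! j = T ! j"
      using False nth_append_length_plus[of T' "[]" "j - length T"]
        nth_append_length_plus[of T "[]" "j - length T"] by simp
    then show ?thesis by simp
  qed
  show ?case using Suc hd_eq col pos by (simp add: Let_def A_def)
qed simp

definition dyck_prefixes :: "nat list \<Rightarrow> letter list set" where
  "dyck_prefixes k = {w. filter is_S w = map S [0..<length (filter is_S w)]
      \<and> length (filter is_S w) \<le> length k \<and> (\<forall>i \<le> length w. 0 \<le> rank_of k (take i w))}"

lemma dyck_prefixes_snocD:
  assumes "w @ [y] \<in> dyck_prefixes k"
  shows "w \<in> dyck_prefixes k"
proof -
  have "filter is_S w = map S [0..<length (filter is_S w)]"
  proof (cases y)
    case (S j)
    then have "filter is_S w @ [S j] = map S [0..<Suc (length (filter is_S w))]"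
      using assms by (simp add: dyck_prefixes_def is_S_def)
    then show ?thesis by simp
  next
    case W
    then show ?thesis using assms by (simp add: dyck_prefixes_def is_S_def)
  qed
  moreover have "length (filter is_S w) \<le> length k"
    using assms by (auto simp: dyck_prefixes_def)
  moreover have "0 \<le> rank_of k (take i w)" if "i \<le> length w" for i
  proof -
    have "i \<le> length (w @ [y])" using that by simp
    with assms have "0 \<le> rank_of k (take i (w @ [y]))"
      unfolding dyck_prefixes_def by blast
    then show ?thesis using that by simp
  qed
  ultimately show ?thesis by (simp add: dyck_prefixes_def)
qed

lemma dyck_prefixes_snoc_S:
  assumes "w @ [S j] \<in> dyck_prefixes k"
  shows "j = length (filter is_S w)" and "j < length k"
proof -
  have "filter is_S w @ [S j] = map S [0..<Suc (length (filter is_S w))]"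
    and len: "Suc (length (filter is_S w)) \<le> length k"
    using assms by (simp_all add: dyck_prefixes_def is_S_def)
  then show "j = length (filter is_S w)" by simp
  with len show "j < length k" by simp
qed

lemma dyck_prefixes_snoc_W:
  assumes "w @ [W] \<in> dyck_prefixes k"
  shows "1 \<le> rank_of k w"
  using assms by (auto simp: dyck_prefixes_def dest: spec[of _ "Suc (length w)"])

lemma snoc_last_in_dyck_prefixes:
  assumes "P \<in> prefixes_before_last k"
  shows "P @ [S (length k)] \<in> dyck_prefixes (k @ [x])"
proof -
  have F: "filter is_S P = map S [0..<length k]"
    and rk: "\<forall>i \<le> length P. 0 \<le> rank_of k (take i P)"
    using assms by (auto simp: prefixes_before_last_def)
  have "0 \<le> rank_of (k @ [x]) (take i (P @ [S (length k)]))"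
    if "i \<le> length (P @ [S (length k)])" for i
  proof (cases "i \<le> length P")
    case True
    then show ?thesis using rk rank_of_snoc_vector_take[OF F] by simp
  next
    case False
    with that have "i = Suc (length P)" by simp
    then show ?thesis
      using rk[rule_format, of "length P"] rank_of_snoc_vector_take[OF F, of x "length P"] by simp
  qed
  then show ?thesis using F by (simp add: dyck_prefixes_def is_S_def)
qed

definition filling_invariant :: "nat list \<Rightarrow> letter list \<Rightarrow> nat list list \<Rightarrow> bool" where
  "filling_invariant k w T \<longleftrightarrow>
     (\<forall>j<length k. T ! j \<noteq> [] \<longleftrightarrow> j < length (filter is_S w)) \<and>
     (\<forall>j<length k. length (T ! j) \<le> Suc (k ! j)) \<and>
     int (\<Sum>j<length (filter is_S w). length (T ! j)) + rank_of k w
       = int (\<Sum>j<length (filter is_S w). Suc (k ! j))"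

lemma sum_lessThan_list_update:
  fixes f :: "'a \<Rightarrow> 'b::comm_monoid_add"
  assumes "j < s" and "s \<le> length T"
  shows "(\<Sum>i<s. f (T[j := v] ! i)) + f (T ! j) = (\<Sum>i<s. f (T ! i)) + f v"
proof -
  have "(\<Sum>i<s. f (T[j := v] ! i)) = f v + (\<Sum>i\<in>{..<s} - {j}. f (T[j := v] ! i))"
    using assms by (subst sum.remove[of _ j]) auto
  moreover have "(\<Sum>i<s. f (T ! i)) = f (T ! j) + (\<Sum>i\<in>{..<s} - {j}. f (T ! i))"
    using assms by (subst sum.remove[of _ j]) auto
  moreover have "(\<Sum>i\<in>{..<s} - {j}. f (T[j := v] ! i)) = (\<Sum>i\<in>{..<s} - {j}. f (T ! i))"
    by (rule sum.cong) auto
  ultimately show ?thesis by (simp add: ac_simps)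
qed

lemma filling_invariant_single:
  assumes "0 < length k"
  shows "filling_invariant k [S 0] ((replicate (length k) [])[0 := [1]])"
  using assms by (auto simp: filling_invariant_def is_S_def nth_list_update Suc_le_eq)

lemma filling_invariant_snoc_S:
  assumes inv: "filling_invariant k w T" and lT: "length T = length k"
    and s: "s = length (filter is_S w)" and sk: "s < length k"
  shows "filling_invariant k (w @ [S s]) (fill_step k T (i, S s))"
proof -
  have ne: "\<forall>j<length k. T ! j \<noteq> [] \<longleftrightarrow> j < s" using inv s by (simp add: filling_invariant_def)
  have "(LEAST j. j < length k \<and> T ! j = []) = s"
    by (rule Least_equality) (use ne sk in auto)
  then have step: "fill_step k T (i, S s) = T[s := [i]]"
    by simp
  have "(\<Sum>j<s. length (T[s := [i]] ! j)) = (\<Sum>j<s. length (T ! j))"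
    by (rule sum.cong) auto
  then have "(\<Sum>j<Suc s. length (T[s := [i]] ! j)) = Suc (\<Sum>j<s. length (T ! j))"
    using lT sk by simp
  then show ?thesis
    using inv lT sk unfolding step filling_invariant_def s[symmetric]
    by (auto simp: nth_list_update is_S_def s[symmetric])
qed

lemma filling_invariant_snoc_W:
  assumes inv: "filling_invariant k w T" and lT: "length T = length k"
    and sk: "length (filter is_S w) \<le> length k" and r: "1 \<le> rank_of k w"
  shows "filling_invariant k (w @ [W]) (fill_step k T (i, W))"
proof -
  define s where "s = length (filter is_S w)"
  define A where "A = active_cols k T"
  have "\<exists>j<s. length (T ! j) < Suc (k ! j)"
  proof (rule ccontr)
    assume "\<not> ?thesis"
    then have "(\<Sum>j<s. Suc (k ! j)) \<le> (\<Sum>j<s. length (T ! j))"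
      by (intro sum_mono) (metis leD lessThan_iff not_less)
    then show False using inv r unfolding filling_invariant_def s_def[symmetric] by linarith
  qed
  then obtain j0 where "j0 < s" "length (T ! j0) < Suc (k ! j0)" by blast
  then have "j0 \<in> A"
    using inv sk unfolding A_def active_cols_def filling_invariant_def s_def[symmetric] by auto
  moreover have "finite A" unfolding A_def active_cols_def by auto
  ultimately have "Max ((\<lambda>j. last (T ! j)) ` A) \<in> (\<lambda>j. last (T ! j)) ` A"
    by (intro Max_in) auto
  then have max_attained: "\<exists>j. j \<in> A \<and> last (T ! j) = Max ((\<lambda>j. last (T ! j)) ` A)" by auto
  define j1 where "j1 = (SOME j. j \<in> A \<and> last (T ! j) = Max ((\<lambda>j. last (T ! j)) ` A))"
  from someI_ex[OF max_attained] have "j1 \<in> A" unfolding j1_def by blast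
  have step: "fill_step k T (i, W) = T[j1 := T ! j1 @ [i]]"
    by (simp add: Let_def A_def j1_def)
  have j1: "j1 < length k" "T ! j1 \<noteq> []" "length (T ! j1) < Suc (k ! j1)"
    using \<open>j1 \<in> A\<close> unfolding A_def active_cols_def by auto
  then have "j1 < s" using inv unfolding filling_invariant_def s_def[symmetric] by auto
  then have "(\<Sum>j<s. length (T[j1 := T ! j1 @ [i]] ! j)) + length (T ! j1)
      = (\<Sum>j<s. length (T ! j)) + length (T ! j1 @ [i])"
    using sum_lessThan_list_update[of j1 s T length] sk lT s_def by simp
  then show ?thesis
    using inv j1 lT unfolding step filling_invariant_def s_def[symmetric]
    by (auto simp: nth_list_update is_S_def s_def)
qed

lemma filling_invariant_fill:
  assumes "w \<in> dyck_prefixes k" and "w \<noteq> []"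
  shows "filling_invariant k w (fill k w)"
  using assms
proof (induction w rule: rev_induct)
  case (snoc y w)
  show ?case
  proof (cases "w = []")
    case True
    then obtain j where y: "y = S j"
      using snoc.prems(1) dyck_prefixes_snoc_W[of "[]" k] by (cases y) auto
    then have "j = 0" and "0 < length k"
      using dyck_prefixes_snoc_S snoc.prems(1) True by fastforce+
    then show ?thesis using True y filling_invariant_single by (simp add: fill_single)
  next
    case False
    have w: "w \<in> dyck_prefixes k" using snoc.prems(1) by (rule dyck_prefixes_snocD)
    then have inv: "filling_invariant k w (fill k w)" using False snoc.IH by blast
    have sk: "length (filter is_S w) \<le> length k" using w by (simp add: dyck_prefixes_def)
    show ?thesis
    proof (cases y)
      case (S j)
      with snoc.prems(1) have "j = length (filter is_S w)" "j < length k"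
        using dyck_prefixes_snoc_S by blast+
      then show ?thesis
        using filling_invariant_snoc_S[OF inv length_fill] False S by (simp add: fill_snoc)
    next
      case W
      with snoc.prems(1) have "1 \<le> rank_of k w" by (simp add: dyck_prefixes_snoc_W)
      then show ?thesis
        using filling_invariant_snoc_W[OF inv length_fill sk] False W by (simp add: fill_snoc)
    qed
  qed
qed simp

lemma fill_step_append_last_empty:
  assumes "T ! length k = []"
  shows "fill_step (k @ [b]) T p = fill_step (k @ [c]) T p"
proof -
  have "active_cols (k @ [b]) T = active_cols (k @ [c]) T"
    using assms by (auto simp: active_cols_def nth_append less_Suc_eq)
  moreover obtain i y where "p = (i, y)" by fastforce
  ultimately show ?thesis by (cases y) (simp_all add: Let_def)
qed

lemma fill_snoc_vector_eq:
  assumes "w @ [y] \<in> dyck_prefixes (k @ [b])" and "length (filter is_S w) \<le> length k"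
  shows "fill (k @ [c]) (w @ [y]) = fill (k @ [b]) (w @ [y])"
  using assms
proof (induction w arbitrary: y rule: rev_induct)
  case Nil
  then show ?case by (simp add: fill_single)
next
  case (snoc y' w)
  let ?T = "fill (k @ [b]) (w @ [y'])"
  have prefix: "w @ [y'] \<in> dyck_prefixes (k @ [b])"
    using snoc.prems(1) by (rule dyck_prefixes_snocD)
  then have "filling_invariant (k @ [b]) (w @ [y']) ?T"
    by (simp add: filling_invariant_fill)
  then have "\<forall>j<length (k @ [b]). ?T ! j \<noteq> [] \<longleftrightarrow> j < length (filter is_S (w @ [y']))"
    unfolding filling_invariant_def by blast
  then have last_empty: "?T ! length k = []"
    using snoc.prems(2) by (metis length_append_singleton lessI not_le)
  have IH: "fill (k @ [c]) (w @ [y']) = ?T"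
    using snoc.IH[OF prefix] snoc.prems(2) by simp
  have fill_snoc': "fill k' ((w @ [y']) @ [y])
      = fill_step k' (fill k' (w @ [y'])) (Suc (length (w @ [y'])), y)" for k'
    by (rule fill_snoc) simp
  show ?case
    unfolding fill_snoc' IH by (rule fill_step_append_last_empty[OF last_empty, symmetric])
qed

lemma depth_close_path_eq:
  assumes P: "P \<in> prefixes_before_last k"
  shows "depth (k @ [b]) (close_path k b P) = depth (k @ [c]) (close_path k c P)"
proof -
  let ?u = "P @ [S (length k)]"
  let ?T = "fill (k @ [b]) ?u"
  have F: "filter is_S P = map S [0..<length k]"
    using P by (simp add: prefixes_before_last_def)
  have same: "fill (k @ [x]) ?u = ?T" for x
    by (rule fill_snoc_vector_eq[OF snoc_last_in_dyck_prefixes[OF P]]) (simp add: F)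
  have "filling_invariant (k @ [b]) ?u ?T"
    using snoc_last_in_dyck_prefixes[OF P] by (simp add: filling_invariant_fill)
  then have ne: "\<forall>j<length ?T. ?T ! j \<noteq> []"
    using F by (simp add: filling_invariant_def is_S_def)
  have le: "\<forall>j<length ?T. \<forall>a\<in>set (?T ! j). a \<le> length ?u"
    using fill_entries_le[of ?u _ "k @ [b]"] by simp
  have "col_ranks (fill (k @ [x]) (close_path k x P)) (Suc (length k)) = col_ranks ?T (Suc (length k))"
    for x
  proof -
    have "close_path k x P = ?u @ replicate (nat (rank_of k P) + x) W"
      by (simp add: close_path_def)
    moreover have "extends_columns (length ?u) (fill (k @ [x]) ?u)
        (fill (k @ [x]) (?u @ replicate (nat (rank_of k P) + x) W))"
      by (rule fill_append_replicate_W) simp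
    ultimately have "extends_columns (length ?u) ?T (fill (k @ [x]) (close_path k x P))"
      by (simp only: same[of x])
    from col_ranks_extends_columns[OF this _ ne le, of "Suc (length k)"] show ?thesis
      by (simp del: col_ranks.simps)
  qed
  then show ?thesis by (simp add: depth_def)
qed

lemma Ctilde_snoc_eq: "Ctilde (k @ [b]) = Ctilde (k @ [c])"
proof -
  have "Ctilde (k @ [x]) = (\<Sum>P\<in>prefixes_before_last k.
      monom (monom 1 (depth (k @ [x]) (close_path k x P))) (area k P + nat (rank_of k P)))" for x
    unfolding Ctilde_def dyck_paths_snoc sum.reindex[OF inj_on_close_path]
    by (intro sum.cong) (simp_all add: area_close_path)
  then show ?thesis
    by (simp add: depth_close_path_eq[of _ k b c] cong: sum.cong)
qed

theorem proposition5p3: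
  fixes as :: "nat list" and b c :: nat
  assumes "length as \<ge> 1"
    and "\<forall>a\<in>set as. a > 0"
    and "b > 0" and "c > 0"
  shows "Ctilde (as @ [b]) = Ctilde (as @ [c])"
  by (rule Ctilde_snoc_eq)

end
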